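(* Let $X\in\mathbb{R}^p$ have distribution function $F$ with density $f_0$. Let $\phi(\cdot;\boldsymbol{\mu},\boldsymbol{\Sigma})$ denote the $N_p(\boldsymbol{\mu},\boldsymbol{\Sigma})$ density. Let $\mathcal{M}$ be a set of cluster configurations; each $m\in\mathcal{M}$ is a parameter $\boldsymbol{\theta}^{(m)}=\{\boldsymbol{\theta}_k^{(m)}\}_{k=1}^{K(\boldsymbol{\theta}^{(m)})}$, $\boldsymbol{\theta}_k^{(m)}=(\pi_k^{(m)},\boldsymbol{\mu}_k^{(m)},\boldsymbol{\Sigma}_k^{(m)})$ with $\pi_k^{(m)}>0$, $\sum_k\pi_k^{(m)}=1$, $\boldsymbol{\mu}_k^{(m)}\in\mathbb{R}^p$, $\boldsymbol{\Sigma}_k^{(m)}$ positive definite. For such $\boldsymbol{\theta}$ define $\mathrm{qs}(\mathbf{x};\boldsymbol{\theta}_k)=\log\pi_k-\tfrac12\log\det\boldsymbol{\Sigma}_k-\tfrac12(\mathbf{x}-\boldsymbol{\mu}_k)^\top\boldsymbol{\Sigma}_k^{-1}(\mathbf{x}-\boldsymbol{\mu}_k)$, $\tau_k(\mathbf{x};\boldsymbol{\theta})=\exp(\mathrm{qs}(\mathbf{x};\boldsymbol{\theta}_k))/\sum_{j=1}^{K(\boldsymbol{\theta})}\exp(\mathrm{qs}(\mathbf{x};\boldsymbol{\theta}_j))$, $$T(\boldsymbol{\theta})=\sum_{k=1}^{K(\boldsymbol{\theta})}\int\tau_k(\mathbf{x};\boldsymbol{\theta})\,\mathrm{qs}(\mathbf{x};\boldsymbol{\theta}_k)\,dF,$$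 the Gaussian mixture density $\psi_\phi(\mathbf{x};\boldsymbol{\theta})=\sum_{k=1}^{K(\boldsymbol{\theta})}\pi_k\phi(\mathbf{x};\boldsymbol{\mu}_k,\boldsymbol{\Sigma}_k)$, the posterior weights $\omega_{\phi,k}(\mathbf{x};\boldsymbol{\theta})=\pi_k\phi(\mathbf{x};\boldsymbol{\mu}_k,\boldsymbol{\Sigma}_k)/\psi_\phi(\mathbf{x};\boldsymbol{\theta})$, and the entropy $\mathrm{Ent}_\phi(\mathbf{x};\boldsymbol{\theta})=-\sum_{k=1}^{K(\boldsymbol{\theta})}\omega_{\phi,k}(\mathbf{x};\boldsymbol{\theta})\log\omega_{\phi,k}(\mathbf{x};\boldsymbol{\theta})$. Let $D_{KL}(f_0\,\|\,g)=\int f_0\log(f_0/g)$ denote the Kullback–Leibler divergence. Assuming all expectations involved exist (and are finite), $$\operatorname*{arg\,max}_{m\in\mathcal{M}}T(\boldsymbol{\theta}^{(m)})=\operatorname*{arg\,min}_{m\in\mathcal{M}}\Big\{D_{KL}\big(f_0\,\|\,\psi_\phi(\cdot;\boldsymbol{\theta}^{(m)})\big)+\mathbb{E}_F\big[\mathrm{Ent}_\phi(X;\boldsymbol{\theta}^{(m)})\big]\Big\},$$ where $\mathbb{E}_F$ denotes expectation under $F$.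
   Context: $K(\boldsymbol{\theta})$ denotes the number of groups described by the configuration $\boldsymbol{\theta}$; $\boldsymbol{\theta}_k$ represents size, center and scatter of the $k$-th cluster. $T$ is the population smooth score criterion. *)

theory Defs
  imports "HOL-Probability.Probability"
begin

text \<open>A cluster component: (weight pi_k, center mu_k, scatter Sigma_k).
  A configuration theta is a list of components; K(theta) = length theta.\<close>

type_synonym 'p comp = "real \<times> (real^'p) \<times> (real^'p^'p)"

definition pos_def_mat :: "real^'p^'p \<Rightarrow> bool" where
  "pos_def_mat S \<longleftrightarrow> transpose S = S \<and> (\<forall>x. x \<noteq> 0 \<longrightarrow> x \<bullet> (S *v x) > 0)"

definition valid_config :: "('p::finite) comp list \<Rightarrow> bool" where
  "valid_config th \<longleftrightarrow>
     (\<forall>k<length th. fst (th ! k) > 0 \<and> pos_def_mat (snd (snd (th ! k))))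
     \<and> (\<Sum>k<length th. fst (th ! k)) = 1"

definition qs :: "(real^'p::finite) \<Rightarrow> 'p comp \<Rightarrow> real" where
  "qs x c = (case c of (pk, mu, S) \<Rightarrow>
     ln pk - ln (det S) / 2 - ((x - mu) \<bullet> (matrix_inv S *v (x - mu))) / 2)"

definition tau :: "nat \<Rightarrow> (real^'p::finite) \<Rightarrow> ('p::finite) comp list \<Rightarrow> real" where
  "tau k x th = exp (qs x (th ! k)) / (\<Sum>j<length th. exp (qs x (th ! j)))"

definition T_crit :: "(real^'p) measure \<Rightarrow> ('p::finite) comp list \<Rightarrow> real" where
  "T_crit F th = (\<Sum>k<length th. integral\<^sup>L F (\<lambda>x. tau k x th * qs x (th ! k)))"

definition gauss_pdf :: "(real^'p::finite) \<Rightarrow> real^'p \<Rightarrow> real^'p^'p \<Rightarrow> real" where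
  "gauss_pdf x mu S =
     exp (- ((x - mu) \<bullet> (matrix_inv S *v (x - mu))) / 2)
     / sqrt ((2 * pi) ^ CARD('p) * det S)"

definition mix_pdf :: "(real^'p::finite) \<Rightarrow> ('p::finite) comp list \<Rightarrow> real" where
  "mix_pdf x th = (\<Sum>k<length th. fst (th ! k) * gauss_pdf x (fst (snd (th ! k))) (snd (snd (th ! k))))"

definition omega :: "nat \<Rightarrow> (real^'p::finite) \<Rightarrow> ('p::finite) comp list \<Rightarrow> real" where
  "omega k x th = fst (th ! k) * gauss_pdf x (fst (snd (th ! k))) (snd (snd (th ! k))) / mix_pdf x th"

definition Ent :: "(real^'p::finite) \<Rightarrow> ('p::finite) comp list \<Rightarrow> real" where
  "Ent x th = - (\<Sum>k<length th. omega k x th * ln (omega k x th))"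

definition KL_div :: "((real^'p::finite) \<Rightarrow> real) \<Rightarrow> (real^'p \<Rightarrow> real) \<Rightarrow> real" where
  "KL_div f0 g = (LINT x|lborel. f0 x * ln (f0 x / g x))"

definition argmax_set :: "('m \<Rightarrow> real) \<Rightarrow> 'm set \<Rightarrow> 'm set" where
  "argmax_set h M = {m \<in> M. \<forall>m'\<in>M. h m' \<le> h m}"

definition argmin_set :: "('m \<Rightarrow> real) \<Rightarrow> 'm set \<Rightarrow> 'm set" where
  "argmin_set h M = {m \<in> M. \<forall>m'\<in>M. h m \<le> h m'}"

end

theory Submission
  imports Defs
begin

text \<open>Up to the constant \<open>(p/2) ln (2\<pi>)\<close>, \<open>exp (qs x \<theta>\<^sub>k)\<close> is the weighted component
  density \<open>\<pi>\<^sub>k \<phi>(x; \<mu>\<^sub>k, \<Sigma>\<^sub>k)\<close>. Hence \<open>\<tau>\<^sub>k = \<omega>\<^sub>\<phi>\<^sub>,\<^sub>k\<close> and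
  \<open>qs x \<theta>\<^sub>k = ln \<omega>\<^sub>\<phi>\<^sub>,\<^sub>k + ln \<psi>\<^sub>\<phi> + const\<close>, so pointwise
  \<open>\<Sum>\<^sub>k \<tau>\<^sub>k qs(x; \<theta>\<^sub>k) = ln \<psi>\<^sub>\<phi>(x; \<theta>) - Ent\<^sub>\<phi>(x; \<theta>) + const\<close>.
  Integrating against \<open>F\<close> gives \<open>T(\<theta>) = E\<^sub>F ln \<psi>\<^sub>\<phi> - E\<^sub>F Ent\<^sub>\<phi> + const\<close>, while for
  two configurations the difference of the divergences \<open>D\<^sub>K\<^sub>L(f\<^sub>0 \<parallel> \<psi>\<^sub>\<phi>)\<close> is the opposite
  difference of the \<open>E\<^sub>F ln \<psi>\<^sub>\<phi>\<close>. Thus \<open>T + D\<^sub>K\<^sub>L + E\<^sub>F Ent\<^sub>\<phi>\<close> is constant on \<open>\<M>\<close>.\<close>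

lemma argmax_set_eq_argmin_set_if_sum_const:
  fixes g h :: "'m \<Rightarrow> real"
  assumes "\<And>m m'. m \<in> M \<Longrightarrow> m' \<in> M \<Longrightarrow> g m + h m = g m' + h m'"
  shows "argmax_set g M = argmin_set h M"
  unfolding argmax_set_def argmin_set_def using assms by fastforce

lemma det_nz_if_quadratic_form_pos:
  fixes A :: "real^'p::finite^'p"
  assumes "\<And>x. x \<noteq> 0 \<Longrightarrow> x \<bullet> (A *v x) > 0"
  shows "det A \<noteq> 0"
proof -
  have "inj ((*v) A)"
  proof (rule linear_injective_0[THEN iffD2])
    show "linear ((*v) A)" by (simp add: matrix_vector_mul_linear)
    show "\<forall>x. A *v x = 0 \<longrightarrow> x = 0" using assms by force
  qed
  then show ?thesis using det_nz_iff_inj[of "(*v) A"] by (simp add: matrix_vector_mul_linear)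
qed

text \<open>The quadratic form stays positive along the segment from \<open>mat 1\<close> to \<open>S\<close>, so \<open>det\<close> does not
  vanish there and, by continuity, keeps the sign of \<open>det (mat 1) = 1\<close>.\<close>

lemma det_pos_if_quadratic_form_pos:
  fixes S :: "real^'p::finite^'p"
  assumes S_pos: "\<And>x. x \<noteq> 0 \<Longrightarrow> x \<bullet> (S *v x) > 0"
  shows "det S > 0"
proof (rule ccontr)
  define A where "A t = t *\<^sub>R mat 1 + (1 - t) *\<^sub>R S" for t :: real
  have A_pos: "x \<bullet> (A t *v x) > 0" if "0 \<le> t" "t \<le> 1" "x \<noteq> 0" for t x
  proof -
    have "x \<bullet> (A t *v x) = t * (x \<bullet> x) + (1 - t) * (x \<bullet> (S *v x))"
      unfolding A_def
      by (simp add: matrix_vector_mult_add_rdistrib inner_add_right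
          scaleR_matrix_vector_assoc[symmetric])
    moreover have "x \<bullet> x > 0" "x \<bullet> (S *v x) > 0" using S_pos \<open>x \<noteq> 0\<close> by auto
    ultimately show ?thesis using that by (smt (verit) mult_nonneg_nonneg mult_pos_pos)
  qed
  have cont: "continuous_on {0..1} (\<lambda>t. det (A t))"
    unfolding det_def A_def by (intro continuous_intros)
  assume "\<not> det S > 0"
  then have "det (A 0) \<le> 0" "det (A 1) = 1" by (simp_all add: A_def)
  then obtain t where "0 \<le> t" "t \<le> 1" "det (A t) = 0"
    using IVT'[of "\<lambda>t. det (A t)" 0 0 1] cont by auto
  with A_pos det_nz_if_quadratic_form_pos show False by blast
qed

lemma det_pos_if_pos_def_mat: "pos_def_mat S \<Longrightarrow> det S > 0"
  unfolding pos_def_mat_def by (rule det_pos_if_quadratic_form_pos) blast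

lemma valid_config_component_pos:
  assumes "valid_config th" "k < length th"
  shows "fst (th ! k) > 0" "det (snd (snd (th ! k))) > 0"
  using assms det_pos_if_pos_def_mat unfolding valid_config_def by auto

lemma valid_config_nonempty: "valid_config th \<Longrightarrow> th \<noteq> []"
  unfolding valid_config_def by auto

lemma exp_qs_eq_gauss_pdf:
  fixes x mu :: "real^'p::finite"
  assumes "pk > 0" "det S > 0"
  shows "exp (qs x (pk, mu, S)) = sqrt ((2 * pi) ^ CARD('p)) * (pk * gauss_pdf x mu S)"
proof -
  define Q where "Q = (x - mu) \<bullet> (matrix_inv S *v (x - mu))"
  have "exp (ln (det S) / 2) = sqrt (det S)"
    using assms(2) by (simp add: ln_sqrt[symmetric])
  moreover have "qs x (pk, mu, S) = ln pk - ln (det S) / 2 - Q / 2"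
    by (simp add: qs_def Q_def)
  ultimately have "exp (qs x (pk, mu, S)) = pk * exp (- Q / 2) / sqrt (det S)"
    using assms(1) by (simp only: exp_diff) (simp add: exp_minus field_simps)
  then show ?thesis
    using assms by (simp add: gauss_pdf_def Q_def real_sqrt_mult field_simps)
qed

lemma exp_qs_valid_config:
  fixes x :: "real^'p::finite"
  assumes "valid_config th" "k < length th"
  shows "exp (qs x (th ! k)) = sqrt ((2 * pi) ^ CARD('p))
           * (fst (th ! k) * gauss_pdf x (fst (snd (th ! k))) (snd (snd (th ! k))))"
  using exp_qs_eq_gauss_pdf valid_config_component_pos[OF assms]
  by (cases "th ! k") auto

lemma gauss_pdf_pos: "det S > 0 \<Longrightarrow> gauss_pdf x mu S > 0"
  unfolding gauss_pdf_def by simp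

lemma mix_pdf_pos:
  assumes "valid_config th"
  shows "mix_pdf x th > 0"
  unfolding mix_pdf_def using valid_config_nonempty[OF assms]
  by (intro sum_pos mult_pos_pos gauss_pdf_pos) (auto simp: valid_config_component_pos[OF assms])

lemma omega_pos:
  assumes "valid_config th" "k < length th"
  shows "omega k x th > 0"
  unfolding omega_def using valid_config_component_pos[OF assms]
  by (intro divide_pos_pos mult_pos_pos gauss_pdf_pos mix_pdf_pos assms(1))

lemma sum_omega_eq_1:
  assumes "valid_config th"
  shows "(\<Sum>k<length th. omega k x th) = 1"
  unfolding omega_def sum_divide_distrib[symmetric] mix_pdf_def[symmetric]
  using mix_pdf_pos[OF assms, of x] by simp

lemma tau_eq_omega:
  fixes x :: "real^'p::finite"
  assumes "valid_config th" "k < length th"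
  shows "tau k x th = omega k x th"
proof -
  define C :: real where "C = sqrt ((2 * pi) ^ CARD('p))"
  have "(\<Sum>j<length th. exp (qs x (th ! j))) = C * mix_pdf x th"
    unfolding mix_pdf_def sum_distrib_left C_def
    by (intro sum.cong) (auto simp: exp_qs_valid_config[OF assms(1)])
  moreover have "C > 0" by (simp add: C_def)
  ultimately show ?thesis
    unfolding tau_def omega_def exp_qs_valid_config[OF assms] C_def by simp
qed

lemma qs_eq_ln_omega:
  fixes x :: "real^'p::finite"
  assumes "valid_config th" "k < length th"
  shows "qs x (th ! k) = ln (omega k x th) + ln (mix_pdf x th) + real CARD('p) / 2 * ln (2 * pi)"
proof -
  define C :: real where "C = sqrt ((2 * pi) ^ CARD('p))"
  have "exp (qs x (th ! k)) = C * (omega k x th * mix_pdf x th)"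
    unfolding exp_qs_valid_config[OF assms] omega_def C_def
    using mix_pdf_pos[OF assms(1), of x] by simp
  then have "qs x (th ! k) = ln (C * (omega k x th * mix_pdf x th))"
    by (metis ln_exp)
  also have "\<dots> = ln C + ln (omega k x th) + ln (mix_pdf x th)"
    using omega_pos[OF assms, of x] mix_pdf_pos[OF assms(1), of x]
    by (simp add: C_def ln_mult)
  finally have "qs x (th ! k) = ln C + ln (omega k x th) + ln (mix_pdf x th)" .
  moreover have "ln C = ln ((2 * pi) ^ CARD('p)) / 2"
    unfolding C_def by (rule ln_sqrt) simp
  ultimately show ?thesis by (simp only: ln_realpow)
qed

lemma sum_tau_qs_eq:
  fixes x :: "real^'p::finite"
  assumes "valid_config th"
  shows "(\<Sum>k<length th. tau k x th * qs x (th ! k))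
           = ln (mix_pdf x th) - Ent x th + real CARD('p) / 2 * ln (2 * pi)"
proof -
  define c :: real where "c = ln (mix_pdf x th) + real CARD('p) / 2 * ln (2 * pi)"
  have "(\<Sum>k<length th. tau k x th * qs x (th ! k))
          = (\<Sum>k<length th. omega k x th * ln (omega k x th)) + (\<Sum>k<length th. omega k x th) * c"
    unfolding sum_distrib_right sum.distrib[symmetric] c_def
    by (intro sum.cong) (auto simp: tau_eq_omega[OF assms] qs_eq_ln_omega[OF assms] algebra_simps)
  then show ?thesis
    unfolding sum_omega_eq_1[OF assms] Ent_def c_def by simp
qed

lemma integrable_ln_mix_pdf:
  fixes F :: "(real^'p::finite) measure"
  assumes "finite_measure F" "valid_config th"
    and "\<And>k. k < length th \<Longrightarrow> integrable F (\<lambda>x. tau k x th * qs x (th ! k))"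
    and "integrable F (\<lambda>x. Ent x th)"
  shows "integrable F (\<lambda>x. ln (mix_pdf x th))"
proof -
  have "integrable F (\<lambda>x. (\<Sum>k<length th. tau k x th * qs x (th ! k)) + Ent x th
                           - real CARD('p) / 2 * ln (2 * pi))"
    using assms by (intro Bochner_Integration.integrable_diff Bochner_Integration.integrable_add
        Bochner_Integration.integrable_sum finite_measure.integrable_const) auto
  then show ?thesis by (simp add: sum_tau_qs_eq[OF assms(2)])
qed

lemma T_crit_eq_integral_ln_mix_pdf:
  fixes F :: "(real^'p::finite) measure"
  assumes F: "prob_space F" and valid: "valid_config th"
    and int_T: "\<And>k. k < length th \<Longrightarrow> integrable F (\<lambda>x. tau k x th * qs x (th ! k))"
    and int_Ent: "integrable F (\<lambda>x. Ent x th)"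
  shows "T_crit F th = (\<integral>x. ln (mix_pdf x th) \<partial>F) - (\<integral>x. Ent x th \<partial>F)
                         + real CARD('p) / 2 * ln (2 * pi)"
proof -
  interpret prob_space F by (rule F)
  have int_ln: "integrable F (\<lambda>x. ln (mix_pdf x th))"
    using integrable_ln_mix_pdf finite_measure_axioms valid int_T int_Ent by blast
  have "T_crit F th = (\<integral>x. (\<Sum>k<length th. tau k x th * qs x (th ! k)) \<partial>F)"
    unfolding T_crit_def using int_T by (intro Bochner_Integration.integral_sum[symmetric]) auto
  also have "\<dots> = (\<integral>x. ln (mix_pdf x th) - Ent x th + real CARD('p) / 2 * ln (2 * pi) \<partial>F)"
    by (simp add: sum_tau_qs_eq[OF valid])
  also have "\<dots> = (\<integral>x. ln (mix_pdf x th) \<partial>F) - (\<integral>x. Ent x th \<partial>F)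
                     + real CARD('p) / 2 * ln (2 * pi)"
    using int_ln int_Ent by (simp add: prob_space)
  finally show ?thesis .
qed

lemma KL_div_diff:
  fixes f0 g h :: "real^'p::finite \<Rightarrow> real"
  defines "F \<equiv> density lborel (\<lambda>x. ennreal (f0 x))"
  assumes f0_meas: "f0 \<in> borel_measurable lborel" and f0_nonneg: "\<And>x. f0 x \<ge> 0"
    and g_pos: "\<And>x. g x > 0" and h_pos: "\<And>x. h x > 0"
    and int_KL: "integrable lborel (\<lambda>x. f0 x * ln (f0 x / g x))"
      "integrable lborel (\<lambda>x. f0 x * ln (f0 x / h x))"
    and int_ln: "integrable F (\<lambda>x. ln (g x))" "integrable F (\<lambda>x. ln (h x))"
  shows "KL_div f0 g - KL_div f0 h = (\<integral>x. ln (h x) \<partial>F) - (\<integral>x. ln (g x) \<partial>F)"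
proof -
  have ratio: "f0 x * ln (f0 x / g x) - f0 x * ln (f0 x / h x) = f0 x * (ln (h x) - ln (g x))" for x
    using f0_nonneg[of x] g_pos[of x] h_pos[of x]
    by (cases "f0 x = 0") (simp_all add: ln_div algebra_simps)
  have "sets F = sets lborel" unfolding F_def by simp
  then have meas: "(\<lambda>x. ln (h x) - ln (g x)) \<in> borel_measurable lborel"
    using int_ln measurable_cong_sets[of F lborel]
    by (metis borel_measurable_diff borel_measurable_integrable)
  have "KL_div f0 g - KL_div f0 h = (LINT x|lborel. f0 x * (ln (h x) - ln (g x)))"
    unfolding KL_div_def ratio[symmetric]
    by (rule Bochner_Integration.integral_diff[OF int_KL, symmetric])
  also have "\<dots> = (\<integral>x. ln (h x) - ln (g x) \<partial>F)"
    unfolding F_def using meas f0_meas f0_nonneg by (simp add: integral_density)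
  also have "\<dots> = (\<integral>x. ln (h x) \<partial>F) - (\<integral>x. ln (g x) \<partial>F)"
    by (rule Bochner_Integration.integral_diff[OF int_ln(2) int_ln(1)])
  finally show ?thesis .
qed

theorem proposition3:
  fixes f0 :: "real^'p \<Rightarrow> real"
    and M :: "'m set"
    and theta :: "'m \<Rightarrow> 'p comp list"
  defines "F \<equiv> density lborel (\<lambda>x. ennreal (f0 x))"
  assumes f0_meas: "f0 \<in> borel_measurable lborel"
    and f0_nonneg: "\<And>x. f0 x \<ge> 0"
    and F_prob: "prob_space F"
    and valid: "\<And>m. m \<in> M \<Longrightarrow> valid_config (theta m)"
    and int_T: "\<And>m k. m \<in> M \<Longrightarrow> k < length (theta m) \<Longrightarrow>
        integrable F (\<lambda>x. tau k x (theta m) * qs x (theta m ! k))"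
    and int_KL: "\<And>m. m \<in> M \<Longrightarrow>
        integrable lborel (\<lambda>x. f0 x * ln (f0 x / mix_pdf x (theta m)))"
    and int_Ent: "\<And>m. m \<in> M \<Longrightarrow> integrable F (\<lambda>x. Ent x (theta m))"
  shows "argmax_set (\<lambda>m. T_crit F (theta m)) M =
         argmin_set (\<lambda>m. KL_div f0 (\<lambda>x. mix_pdf x (theta m))
                          + integral\<^sup>L F (\<lambda>x. Ent x (theta m))) M"
proof (rule argmax_set_eq_argmin_set_if_sum_const)
  fix m m' assume m: "m \<in> M" and m': "m' \<in> M"
  have T_eq: "T_crit F (theta n) = (\<integral>x. ln (mix_pdf x (theta n)) \<partial>F)
                - (\<integral>x. Ent x (theta n) \<partial>F) + real CARD('p) / 2 * ln (2 * pi)" if "n \<in> M" for n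
    using T_crit_eq_integral_ln_mix_pdf F_prob valid int_T int_Ent that by blast
  have int_ln: "integrable F (\<lambda>x. ln (mix_pdf x (theta n)))" if "n \<in> M" for n
    using integrable_ln_mix_pdf prob_space.axioms(1)[OF F_prob] valid int_T int_Ent that
    by blast
  have "KL_div f0 (\<lambda>x. mix_pdf x (theta m)) - KL_div f0 (\<lambda>x. mix_pdf x (theta m'))
      = (\<integral>x. ln (mix_pdf x (theta m')) \<partial>F) - (\<integral>x. ln (mix_pdf x (theta m)) \<partial>F)"
    unfolding F_def using m m' f0_meas f0_nonneg
    by (intro KL_div_diff mix_pdf_pos valid int_KL int_ln[unfolded F_def])
  with T_eq[OF m] T_eq[OF m'] show
    "T_crit F (theta m) + (KL_div f0 (\<lambda>x. mix_pdf x (theta m)) + (\<integral>x. Ent x (theta m) \<partial>F))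
      = T_crit F (theta m') + (KL_div f0 (\<lambda>x. mix_pdf x (theta m')) + (\<integral>x. Ent x (theta m') \<partial>F))"
    by simp
qed

end
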